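(* Let $x^A=x_1^{\alpha_1}\cdots x_N^{\alpha_N}$ with $\alpha_1,\dots,\alpha_N\ge 0$, $D=N+\alpha_1+\dots+\alpha_N$, and let $\mathbb{R}^N_*=\{x\in\mathbb{R}^N: x_i>0 \text{ whenever } \alpha_i>0\}$. For every $u\in S_A$ with $u\neq 0$, setting $$\lambda=\left(\frac{\int_{\mathbb{R}^N_*}|u|^2|x|^2x^A\,dx}{\int_{\mathbb{R}^N_*}|\nabla u|^2x^A\,dx}\right)^{1/4},$$ we have $$\left(\int_{\mathbb{R}^N_*}|\nabla u|^2x^A\,dx\right)^{1/2}\left(\int_{\mathbb{R}^N_*}|u|^2|x|^2x^A\,dx\right)^{1/2}-\frac{D}{2}\int_{\mathbb{R}^N_*}|u|^2x^A\,dx=\frac{\lambda^2}{2}\int_{\mathbb{R}^N_*}\left|\nabla\left(ue^{\frac{|x|^2}{2\lambda^2}}\right)\right|^2e^{-\frac{|x|^2}{\lambda^2}}x^A\,dx.$$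
   Context: $N_*$ denotes the set of $u\in C_0^\infty(\overline{\mathbb{R}^N_*})$ with $\nabla u\cdot\vec\eta=0$ on $\partial\mathbb{R}^N_*$, where $\vec\eta$ is the outer unit normal of $\mathbb{R}^N_*$. $S_A$ is the completion of $N_*$ under the norm $\left(\int_{\mathbb{R}^N_*}|\nabla u|^2x^A\,dx\right)^{1/2}+\left(\int_{\mathbb{R}^N_*}|u|^2|x|^2x^A\,dx\right)^{1/2}$. *)

theory Defs
  imports "HOL-Analysis.Analysis"
begin

text \<open>Weight x^A; factors with alpha_i = 0 are identically 1 (avoids Isabelle's 0 powr 0 = 0).\<close>
definition wA :: "real^'n \<Rightarrow> real^'n \<Rightarrow> real" where
  "wA \<alpha> x = (\<Prod>i\<in>UNIV. if \<alpha>$i = 0 then 1 else x$i powr (\<alpha>$i))"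

definition Rstar :: "real^'n \<Rightarrow> (real^'n) set" where
  "Rstar \<alpha> = {x. \<forall>i. \<alpha>$i > 0 \<longrightarrow> x$i > 0}"

definition dpart1 :: "'n \<Rightarrow> (real^'n \<Rightarrow> real) \<Rightarrow> real^'n \<Rightarrow> real" where
  "dpart1 i f x = deriv (\<lambda>t. f (x + t *\<^sub>R axis i 1)) 0"

fun dpart :: "'n list \<Rightarrow> (real^'n \<Rightarrow> real) \<Rightarrow> real^'n \<Rightarrow> real" where
  "dpart [] f = f"
| "dpart (i # is) f = dpart1 i (dpart is f)"

definition smooth :: "(real^'n \<Rightarrow> real) \<Rightarrow> bool" where
  "smooth f \<longleftrightarrow> (\<forall>is x. dpart is f differentiable (at x))"

definition grad :: "(real^'n \<Rightarrow> real) \<Rightarrow> real^'n \<Rightarrow> real^'n" where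
  "grad f x = (\<chi> i. dpart1 i f x)"

text \<open>The class N_*: smooth, compactly supported, with vanishing normal derivative on the
  boundary of R^N_* (the outer normal on the face x_i = 0 is -e_i).\<close>
definition Nstar :: "real^'n \<Rightarrow> (real^'n \<Rightarrow> real) set" where
  "Nstar \<alpha> = {\<phi>. smooth \<phi> \<and> compact (closure {x. \<phi> x \<noteq> 0}) \<and>
      (\<forall>i x. \<alpha>$i > 0 \<longrightarrow> x \<in> closure (Rstar \<alpha>) \<longrightarrow> x$i = 0 \<longrightarrow> dpart1 i \<phi> x = 0)}"

text \<open>S_A: completion of N_* under the given norm. An element is represented by a pair (u, g)
  of a function and its (weak) gradient, which are limits of some sequence in N_* in the
  weighted L^2 norms of the gradient and of |x| u respectively.\<close>
definition SA :: "real^'n \<Rightarrow> ((real^'n \<Rightarrow> real) \<times> (real^'n \<Rightarrow> real^'n)) set" where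
  "SA \<alpha> = {(u, g). u \<in> borel_measurable lborel \<and> g \<in> borel_measurable lborel \<and>
      (\<exists>\<phi>::nat \<Rightarrow> real^'n \<Rightarrow> real. (\<forall>k. \<phi> k \<in> Nstar \<alpha>) \<and>
         ((\<lambda>k. \<integral>\<^sup>+ x\<in>Rstar \<alpha>. ennreal ((norm (grad (\<phi> k) x - g x))\<^sup>2 * wA \<alpha> x) \<partial>lborel)
            \<longlonglongrightarrow> 0) \<and>
         ((\<lambda>k. \<integral>\<^sup>+ x\<in>Rstar \<alpha>. ennreal ((\<phi> k x - u x)\<^sup>2 * (norm x)\<^sup>2 * wA \<alpha> x) \<partial>lborel)
            \<longlonglongrightarrow> 0))}"

end

theory Submission
  imports Defs
begin

text \<open>For \<psi> smooth with compact support, the substitution x \<mapsto> t x gives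
  \<integral> \<psi>(t x)^2 x^A dx = t^(-D) \<integral> \<psi>^2 x^A dx, because R^N_* is a cone and x^A is
  homogeneous of degree D - N. Differentiating at t = 1 under the integral sign yields
  D \<integral> \<psi>^2 x^A = -2 \<integral> \<psi> (\<nabla>\<psi> \<cdot> x) x^A without any boundary term. Applied to differences \<phi>_k - \<phi>_m of an approximating sequence,
  the identity bounds their distance in L^2(x^A) by their S_A distance; Fatou's lemma along an
  a.e. convergent subsequence then gives \<phi>_k \<rightarrow> u in L^2(x^A), and the identity passes
  to the limit. Expanding the square, the right-hand side equals
  \<lambda>^2 I1 / 2 + \<integral> u (g \<cdot> x) x^A + I2 / (2 \<lambda>^2), and \<lambda>^4 = I2 / I1 makes each of the two
  outer terms equal to sqrt (I1 I2) / 2.\<close>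

section \<open>Dilations and homogeneous weights\<close>

lemma lborel_integral_scaleR:
  fixes f :: "'a::euclidean_space \<Rightarrow> real"
  assumes "c \<noteq> 0" and [measurable]: "f \<in> borel_measurable borel"
  shows "(\<integral>x. f x \<partial>lborel) = \<bar>c\<bar> ^ DIM('a) * (\<integral>x. f (c *\<^sub>R x) \<partial>lborel)"
proof -
  have "(\<integral>x. f x \<partial>lborel)
      = (\<integral>x. f x \<partial>density (distr lborel borel (\<lambda>x. 0 + c *\<^sub>R x)) (\<lambda>_. \<bar>c\<bar> ^ DIM('a)))"
    by (simp only: lborel_affine[OF assms(1), symmetric])
  also have "\<dots> = (\<integral>x. \<bar>c\<bar> ^ DIM('a) * f (c *\<^sub>R x) \<partial>lborel)"
    by (simp add: integral_density integral_distr)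
  finally show ?thesis by simp
qed

lemma continuous_vanishing_outside_ball_bounded:
  fixes f :: "'a::euclidean_space \<Rightarrow> 'b::real_normed_vector"
  assumes "continuous_on UNIV f" and "\<And>x. R \<le> norm x \<Longrightarrow> f x = 0"
  obtains B where "\<And>x. norm (f x) \<le> B"
proof -
  obtain B where B: "\<And>x. x \<in> cball 0 \<bar>R\<bar> \<Longrightarrow> norm (f x) \<le> B"
    using continuous_on_compact_bound[OF compact_cball continuous_on_subset[OF assms(1) subset_UNIV]]
    by blast
  have "norm (f x) \<le> \<bar>B\<bar>" for x
    using B[of x] assms(2)[of x] by (cases "norm x \<le> \<bar>R\<bar>") auto
  then show thesis by (rule that)
qed

lemma has_real_derivative_sq_dilation:
  fixes \<psi> :: "'a::real_inner \<Rightarrow> real"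
  assumes "\<And>x. (\<psi> has_derivative (\<lambda>v. G x \<bullet> v)) (at x)"
  shows "((\<lambda>t. (\<psi> (t *\<^sub>R x))\<^sup>2) has_real_derivative 2 * \<psi> (t *\<^sub>R x) * (G (t *\<^sub>R x) \<bullet> x)) (at t)"
proof -
  have "((\<lambda>t. \<psi> (t *\<^sub>R x)) has_derivative (\<lambda>v. G (t *\<^sub>R x) \<bullet> (v *\<^sub>R x))) (at t)"
    by (rule has_derivative_compose[OF _ assms]) (auto intro!: derivative_eq_intros)
  then have "((\<lambda>t. \<psi> (t *\<^sub>R x)) has_real_derivative G (t *\<^sub>R x) \<bullet> x) (at t)"
    by (simp add: has_field_derivative_def mult_commute_abs)
  from DERIV_mult[OF this this] show ?thesis
    by (simp add: power2_eq_square mult.assoc)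
qed

lemma abs_dilation_quotient_le:
  fixes \<psi> :: "'a::real_inner \<Rightarrow> real"
  assumes der: "\<And>x. (\<psi> has_derivative (\<lambda>v. G x \<bullet> v)) (at x)"
    and supp: "\<And>x. r \<le> norm x \<Longrightarrow> \<psi> x = 0"
    and bound_\<psi>: "\<And>y. norm y \<le> 2 * r \<Longrightarrow> \<bar>\<psi> y\<bar> \<le> B\<psi>"
    and bound_G: "\<And>y. norm y \<le> 2 * r \<Longrightarrow> norm (G y) \<le> BG"
    and "0 < h" "h \<le> 1"
  shows "\<bar>((\<psi> ((1 + h) *\<^sub>R x))\<^sup>2 - (\<psi> x)\<^sup>2) / h\<bar> \<le> indicator (ball 0 r) x * (2 * B\<psi> * BG * r)"
proof (cases "norm x < r")
  case False
  have "norm x \<le> norm ((1 + h) *\<^sub>R x)"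
    using \<open>0 < h\<close> by (simp add: mult_le_cancel_right1)
  then show ?thesis
    using False supp[of x] supp[of "(1 + h) *\<^sub>R x"] by simp
next
  case True
  obtain z where z: "1 < z" "z < 1 + h" and
    mvt: "(\<psi> ((1 + h) *\<^sub>R x))\<^sup>2 - (\<psi> (1 *\<^sub>R x))\<^sup>2 = (1 + h - 1) * (2 * \<psi> (z *\<^sub>R x) * (G (z *\<^sub>R x) \<bullet> x))"
    using MVT2[of 1 "1 + h" "\<lambda>t. (\<psi> (t *\<^sub>R x))\<^sup>2" "\<lambda>t. 2 * \<psi> (t *\<^sub>R x) * (G (t *\<^sub>R x) \<bullet> x)"]
      \<open>0 < h\<close> has_real_derivative_sq_dilation[OF der, of x] by auto
  have "norm (z *\<^sub>R x) = z * norm x"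
    using z(1) by simp
  also have "\<dots> \<le> 2 * r"
    using z \<open>h \<le> 1\<close> True by (intro mult_mono) auto
  finally have "\<bar>\<psi> (z *\<^sub>R x)\<bar> \<le> B\<psi>" and G_le: "norm (G (z *\<^sub>R x)) \<le> BG"
    using bound_\<psi> bound_G by auto
  have "\<bar>G (z *\<^sub>R x) \<bullet> x\<bar> \<le> norm (G (z *\<^sub>R x)) * norm x"
    by (rule Cauchy_Schwarz_ineq2)
  also have "\<dots> \<le> BG * r"
    using G_le True by (intro mult_mono) (auto intro: order_trans[OF norm_ge_zero])
  finally have "\<bar>2 * \<psi> (z *\<^sub>R x) * (G (z *\<^sub>R x) \<bullet> x)\<bar> \<le> 2 * B\<psi> * (BG * r)"
    using \<open>\<bar>\<psi> (z *\<^sub>R x)\<bar> \<le> B\<psi>\<close> unfolding abs_mult by (intro mult_mono) auto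
  then show ?thesis
    using mvt \<open>0 < h\<close> True by (simp add: mult_ac)
qed

locale homogeneous_weight =
  fixes w :: "'a::euclidean_space \<Rightarrow> real" and s :: real
  assumes nonneg: "\<And>x. 0 \<le> w x"
    and borel_measurable_w [measurable]: "w \<in> borel_measurable borel"
    and homogeneous: "\<And>t x. 0 < t \<Longrightarrow> w (t *\<^sub>R x) = t powr s * w x"
    and locally_integrable: "\<And>R. integrable lborel (\<lambda>x. indicator (ball 0 R) x * w x)"
begin

lemma integrable_mult_bounded_support:
  fixes F :: "'a \<Rightarrow> real"
  assumes [measurable]: "F \<in> borel_measurable borel"
    and "\<And>x. \<bar>F x\<bar> \<le> B" and "\<And>x. R \<le> norm x \<Longrightarrow> F x = 0"
  shows "integrable lborel (\<lambda>x. w x * F x)"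
proof (rule Bochner_Integration.integrable_bound)
  show "integrable lborel (\<lambda>x. B * (indicator (ball 0 R) x * w x))"
    using locally_integrable by (rule integrable_mult_right)
  show "AE x in lborel. norm (w x * F x) \<le> norm (B * (indicator (ball 0 R) x * w x))"
  proof (rule AE_I2)
    fix x
    have "\<bar>F x\<bar> \<le> \<bar>B\<bar> * indicator (ball 0 R) x"
      using assms(2,3)[of x] by (auto simp: indicator_def not_less)
    from mult_left_mono[OF this nonneg]
    show "norm (w x * F x) \<le> norm (B * (indicator (ball 0 R) x * w x))"
      using nonneg[of x] by (simp add: abs_mult mult_ac)
  qed
qed measurable

lemma integral_dilation:
  fixes F :: "'a \<Rightarrow> real"
  assumes "0 < t" and [measurable]: "F \<in> borel_measurable borel"
  shows "(\<integral>x. w x * F (t *\<^sub>R x) \<partial>lborel) = t powr - (DIM('a) + s) * (\<integral>x. w x * F x \<partial>lborel)"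
proof -
  have "(\<integral>x. w x * F x \<partial>lborel) = t ^ DIM('a) * (\<integral>x. w (t *\<^sub>R x) * F (t *\<^sub>R x) \<partial>lborel)"
    using lborel_integral_scaleR[of t "\<lambda>x. w x * F x"] assms by simp
  also have "\<dots> = t powr (DIM('a) + s) * (\<integral>x. w x * F (t *\<^sub>R x) \<partial>lborel)"
    using assms by (simp add: homogeneous mult.assoc powr_add powr_realpow)
  finally show ?thesis
    using assms(1) by (simp add: mult.assoc[symmetric] powr_add[symmetric])
qed

lemma integrable_mult_continuous_support:
  fixes F :: "'a \<Rightarrow> real"
  assumes "continuous_on UNIV F" and "\<And>x. R \<le> norm x \<Longrightarrow> F x = 0"
  shows "integrable lborel (\<lambda>x. w x * F x)"
proof -
  obtain B where "\<And>x. norm (F x) \<le> B"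
    using continuous_vanishing_outside_ball_bounded[OF assms] by blast
  with assms show ?thesis
    by (intro integrable_mult_bounded_support[of F B R] borel_measurable_continuous_onI) auto
qed

lemma tendsto_integral_dilation_quotient:
  fixes \<psi> :: "'a \<Rightarrow> real"
  assumes der: "\<And>x. (\<psi> has_derivative (\<lambda>v. G x \<bullet> v)) (at x)"
    and cont: "continuous_on UNIV G"
    and supp: "\<And>x. R \<le> norm x \<Longrightarrow> \<psi> x = 0"
    and h: "filterlim h (at 0) sequentially" "\<And>n. 0 < h n" "\<And>n. h n \<le> 1"
  shows "(\<lambda>n. \<integral>x. w x * (((\<psi> ((1 + h n) *\<^sub>R x))\<^sup>2 - (\<psi> x)\<^sup>2) / h n) \<partial>lborel)
    \<longlonglongrightarrow> (\<integral>x. w x * (2 * \<psi> x * (G x \<bullet> x)) \<partial>lborel)"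
proof -
  define r where "r = \<bar>R\<bar>"
  have cont_\<psi>: "continuous_on UNIV \<psi>"
    using der by (meson continuous_at_imp_continuous_on has_derivative_continuous)
  have [measurable]: "\<psi> \<in> borel_measurable borel" "G \<in> borel_measurable borel"
    using cont_\<psi> cont by (auto intro: borel_measurable_continuous_onI)
  have supp_r: "\<And>x. r \<le> norm x \<Longrightarrow> \<psi> x = 0"
    using supp by (simp add: r_def)
  obtain B\<psi> where B\<psi>: "\<And>y. norm y \<le> 2 * r \<Longrightarrow> \<bar>\<psi> y\<bar> \<le> B\<psi>"
    using continuous_on_compact_bound[OF compact_cball continuous_on_subset[OF cont_\<psi> subset_UNIV]]
    by (metis mem_cball_0 real_norm_def)
  obtain BG where BG: "\<And>y. norm y \<le> 2 * r \<Longrightarrow> norm (G y) \<le> BG"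
    using continuous_on_compact_bound[OF compact_cball continuous_on_subset[OF cont subset_UNIV]]
    by (metis mem_cball_0)
  show ?thesis
  proof (rule integral_dominated_convergence
      [where w="\<lambda>x. w x * (indicator (ball 0 r) x * (2 * B\<psi> * BG * r))"])
    show "integrable lborel (\<lambda>x. w x * (indicator (ball 0 r) x * (2 * B\<psi> * BG * r)))"
      by (rule integrable_mult_bounded_support[where B="\<bar>2 * B\<psi> * BG * r\<bar>" and R=r])
        (auto simp: indicator_def abs_mult)
    show "AE x in lborel. (\<lambda>n. w x * (((\<psi> ((1 + h n) *\<^sub>R x))\<^sup>2 - (\<psi> x)\<^sup>2) / h n))
        \<longlonglongrightarrow> w x * (2 * \<psi> x * (G x \<bullet> x))"
    proof (rule AE_I2)
      fix x
      have "((\<lambda>k. ((\<psi> ((1 + k) *\<^sub>R x))\<^sup>2 - (\<psi> (1 *\<^sub>R x))\<^sup>2) / k)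
          \<longlongrightarrow> 2 * \<psi> (1 *\<^sub>R x) * (G (1 *\<^sub>R x) \<bullet> x)) (at 0)"
        using has_real_derivative_sq_dilation[OF der, of x 1] by (simp only: DERIV_def)
      from tendsto_mult_left[OF filterlim_compose[OF this h(1)], of "w x"]
      show "(\<lambda>n. w x * (((\<psi> ((1 + h n) *\<^sub>R x))\<^sup>2 - (\<psi> x)\<^sup>2) / h n))
          \<longlonglongrightarrow> w x * (2 * \<psi> x * (G x \<bullet> x))" by simp
    qed
    show "AE x in lborel. norm (w x * (((\<psi> ((1 + h n) *\<^sub>R x))\<^sup>2 - (\<psi> x)\<^sup>2) / h n))
        \<le> w x * (indicator (ball 0 r) x * (2 * B\<psi> * BG * r))" for n
    proof (rule AE_I2)
      fix x
      from mult_left_mono[OF abs_dilation_quotient_le[OF der supp_r B\<psi> BG h(2,3)] nonneg[of x]]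
      show "norm (w x * (((\<psi> ((1 + h n) *\<^sub>R x))\<^sup>2 - (\<psi> x)\<^sup>2) / h n))
          \<le> w x * (indicator (ball 0 r) x * (2 * B\<psi> * BG * r))"
        using nonneg[of x] by (simp add: abs_mult)
    qed
  qed measurable
qed

lemma integral_dilation_quotient:
  fixes \<psi> :: "'a \<Rightarrow> real"
  assumes cont: "continuous_on UNIV \<psi>" and supp: "\<And>x. R \<le> norm x \<Longrightarrow> \<psi> x = 0" and "0 < h"
  shows "(\<integral>x. w x * (((\<psi> ((1 + h) *\<^sub>R x))\<^sup>2 - (\<psi> x)\<^sup>2) / h) \<partial>lborel)
    = ((1 + h) powr - (DIM('a) + s) - 1) / h * (\<integral>x. w x * (\<psi> x)\<^sup>2 \<partial>lborel)"
proof -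
  have [measurable]: "\<psi> \<in> borel_measurable borel"
    using cont by (rule borel_measurable_continuous_onI)
  have integrable_dilated: "integrable lborel (\<lambda>x. w x * (\<psi> (t *\<^sub>R x))\<^sup>2)" if "1 \<le> t" for t
  proof (rule integrable_mult_continuous_support[where R="\<bar>R\<bar>"])
    show "continuous_on UNIV (\<lambda>x. (\<psi> (t *\<^sub>R x))\<^sup>2)"
      by (intro continuous_intros continuous_on_compose2[OF cont]) auto
    show "(\<psi> (t *\<^sub>R x))\<^sup>2 = 0" if "\<bar>R\<bar> \<le> norm x" for x
      using supp[of "t *\<^sub>R x"] that \<open>1 \<le> t\<close> mult_mono[of 1 t "norm x" "norm x"] by auto
  qed
  have "(\<integral>x. w x * (((\<psi> ((1 + h) *\<^sub>R x))\<^sup>2 - (\<psi> x)\<^sup>2) / h) \<partial>lborel)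
      = ((\<integral>x. w x * (\<psi> ((1 + h) *\<^sub>R x))\<^sup>2 \<partial>lborel) - (\<integral>x. w x * (\<psi> x)\<^sup>2 \<partial>lborel)) / h"
    using integrable_dilated[of "1 + h"] integrable_dilated[of 1] \<open>0 < h\<close>
    by (simp add: right_diff_distrib flip: Bochner_Integration.integral_diff)
  also have "(\<integral>x. w x * (\<psi> ((1 + h) *\<^sub>R x))\<^sup>2 \<partial>lborel)
      = (1 + h) powr - (DIM('a) + s) * (\<integral>x. w x * (\<psi> x)\<^sup>2 \<partial>lborel)"
    by (rule integral_dilation) (use \<open>0 < h\<close> in auto)
  finally show ?thesis
    by (simp add: field_simps)
qed

theorem dilation_identity:
  fixes \<psi> :: "'a \<Rightarrow> real"
  assumes der: "\<And>x. (\<psi> has_derivative (\<lambda>v. G x \<bullet> v)) (at x)"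
    and cont: "continuous_on UNIV G"
    and supp: "\<And>x. R \<le> norm x \<Longrightarrow> \<psi> x = 0"
  shows "(DIM('a) + s) * (\<integral>x. w x * (\<psi> x)\<^sup>2 \<partial>lborel)
    = -2 * (\<integral>x. w x * (\<psi> x * (G x \<bullet> x)) \<partial>lborel)"
proof -
  define D where "D = DIM('a) + s"
  define C where "C = (\<integral>x. w x * (\<psi> x)\<^sup>2 \<partial>lborel)"
  define h :: "nat \<Rightarrow> real" where "h n = inverse (Suc n)" for n
  have h: "filterlim h (at 0) sequentially" "\<And>n. 0 < h n" "\<And>n. h n \<le> 1"
    unfolding h_def using LIMSEQ_inverse_real_of_nat
    by (auto intro!: filterlim_atI simp: field_simps)
  have "continuous_on UNIV \<psi>"
    using der by (meson continuous_at_imp_continuous_on has_derivative_continuous)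
  from integral_dilation_quotient[OF this supp h(2)]
  have quotient: "(\<integral>x. w x * (((\<psi> ((1 + h n) *\<^sub>R x))\<^sup>2 - (\<psi> x)\<^sup>2) / h n) \<partial>lborel)
      = ((1 + h n) powr - D - 1) / h n * C" for n
    unfolding C_def D_def .
  have "((\<lambda>k. ((1 + k) powr - D - 1 powr - D) / k) \<longlongrightarrow> - D * 1 powr (- D - 1)) (at 0)"
    using has_real_derivative_powr[of 1 "- D"] by (simp only: DERIV_def)
  from tendsto_mult_right[OF filterlim_compose[OF this h(1)], of C]
  have "(\<lambda>n. ((1 + h n) powr - D - 1) / h n * C) \<longlonglongrightarrow> - D * C"
    by simp
  moreover have "(\<lambda>n. ((1 + h n) powr - D - 1) / h n * C)
      \<longlonglongrightarrow> (\<integral>x. w x * (2 * \<psi> x * (G x \<bullet> x)) \<partial>lborel)"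
    using tendsto_integral_dilation_quotient[OF der cont supp h] unfolding quotient .
  ultimately have "- D * C = (\<integral>x. w x * (2 * \<psi> x * (G x \<bullet> x)) \<partial>lborel)"
    by (rule LIMSEQ_unique)
  also have "\<dots> = 2 * (\<integral>x. w x * (\<psi> x * (G x \<bullet> x)) \<partial>lborel)"
    by (subst integral_mult_right_zero[symmetric]) (simp add: mult_ac)
  finally show ?thesis
    unfolding C_def D_def by (simp only: mult_minus_left)
qed

end

section \<open>Passing to the limit in L^2\<close>

lemma norm_diff_sq_le: "(norm (a - b))\<^sup>2 \<le> 2 * (norm a)\<^sup>2 + 2 * (norm (b :: 'a::real_normed_vector))\<^sup>2"
proof -
  have "(norm (a - b))\<^sup>2 \<le> (norm a + norm b)\<^sup>2"
    using norm_triangle_ineq4[of a b] by (simp add: power_mono)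
  also have "\<dots> \<le> 2 * (norm a)\<^sup>2 + 2 * (norm b)\<^sup>2"
    using sum_squares_bound[of "norm a" "norm b"] by (simp add: power2_sum)
  finally show ?thesis .
qed

lemma integrable_norm_sq_diff:
  fixes a b :: "'a \<Rightarrow> 'b::euclidean_space"
  assumes [measurable]: "a \<in> borel_measurable M" "b \<in> borel_measurable M"
    and "integrable M (\<lambda>x. (norm (a x))\<^sup>2)" "integrable M (\<lambda>x. (norm (b x))\<^sup>2)"
  shows "integrable M (\<lambda>x. (norm (a x - b x))\<^sup>2)"
  by (rule Bochner_Integration.integrable_bound[where f="\<lambda>x. 2 * (norm (a x))\<^sup>2 + 2 * (norm (b x))\<^sup>2"])
    (use assms norm_diff_sq_le in auto)

lemma L2_Cauchy_Schwarz:
  fixes a b :: "'a \<Rightarrow> 'b::euclidean_space"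
  assumes [measurable]: "a \<in> borel_measurable M" "b \<in> borel_measurable M"
    and a: "integrable M (\<lambda>x. (norm (a x))\<^sup>2)" and b: "integrable M (\<lambda>x. (norm (b x))\<^sup>2)"
  shows integrable_inner_L2: "integrable M (\<lambda>x. a x \<bullet> b x)"
    and abs_integral_inner_le:
      "\<bar>\<integral>x. a x \<bullet> b x \<partial>M\<bar> \<le> sqrt (\<integral>x. (norm (a x))\<^sup>2 \<partial>M) * sqrt (\<integral>x. (norm (b x))\<^sup>2 \<partial>M)"
proof -
  have int_norms: "integrable M (\<lambda>x. norm (a x) * norm (b x))"
  proof (rule Bochner_Integration.integrable_bound[where f="\<lambda>x. (norm (a x))\<^sup>2 + (norm (b x))\<^sup>2"])
    show "AE x in M. norm (norm (a x) * norm (b x)) \<le> norm ((norm (a x))\<^sup>2 + (norm (b x))\<^sup>2)"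
      using sum_squares_bound[of "norm (a x)" "norm (b x)" for x]
      by (intro AE_I2) (simp add: order_trans[OF _ sum_squares_bound])
  qed (use a b in auto)
  show int_inner: "integrable M (\<lambda>x. a x \<bullet> b x)"
    by (rule Bochner_Integration.integrable_bound[OF int_norms]) (auto simp: Cauchy_Schwarz_ineq2)
  define A where "A = (\<integral>x. (norm (a x))\<^sup>2 \<partial>M)"
  define B where "B = (\<integral>x. (norm (b x))\<^sup>2 \<partial>M)"
  define X where "X = (\<integral>x. norm (a x) * norm (b x) \<partial>M)"
  have abs_le: "\<bar>\<integral>x. a x \<bullet> b x \<partial>M\<bar> \<le> X"
    unfolding X_def using int_inner int_norms
    by (intro order_trans[OF integral_abs_bound] integral_mono) (auto simp: Cauchy_Schwarz_ineq2)
  have "(ennreal X)\<^sup>2 \<le> ennreal A * ennreal B"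
  proof -
    have "ennreal X = (\<integral>\<^sup>+x. ennreal (norm (a x)) * ennreal (norm (b x)) \<partial>M)"
      unfolding X_def using int_norms by (simp add: nn_integral_eq_integral[symmetric] ennreal_mult)
    moreover have "ennreal A = (\<integral>\<^sup>+x. (ennreal (norm (a x)))\<^sup>2 \<partial>M)"
      unfolding A_def using a by (simp add: nn_integral_eq_integral[symmetric] ennreal_power)
    moreover have "ennreal B = (\<integral>\<^sup>+x. (ennreal (norm (b x)))\<^sup>2 \<partial>M)"
      unfolding B_def using b by (simp add: nn_integral_eq_integral[symmetric] ennreal_power)
    ultimately show ?thesis
      by (simp only:) (rule Cauchy_Schwarz_nn_integral; measurable)
  qed
  moreover have "0 \<le> X" "0 \<le> A" "0 \<le> B"
    unfolding A_def B_def X_def by auto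
  ultimately have "X\<^sup>2 \<le> A * B"
    by (simp add: ennreal_power ennreal_mult[symmetric])
  then have "X \<le> sqrt A * sqrt B"
    by (metis real_le_rsqrt real_sqrt_mult)
  with abs_le show "\<bar>\<integral>x. a x \<bullet> b x \<partial>M\<bar> \<le> sqrt A * sqrt B"
    by linarith
qed

lemma tendsto_integral_inner_L2:
  fixes ak bk :: "nat \<Rightarrow> 'a \<Rightarrow> 'b::euclidean_space" and a b :: "'a \<Rightarrow> 'b"
  assumes [measurable]: "\<And>k. ak k \<in> borel_measurable M" "\<And>k. bk k \<in> borel_measurable M"
      "a \<in> borel_measurable M" "b \<in> borel_measurable M"
    and L2: "\<And>k. integrable M (\<lambda>x. (norm (ak k x))\<^sup>2)" "integrable M (\<lambda>x. (norm (a x))\<^sup>2)"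
      "\<And>k. integrable M (\<lambda>x. (norm (bk k x))\<^sup>2)" "integrable M (\<lambda>x. (norm (b x))\<^sup>2)"
    and conv_a: "(\<lambda>k. \<integral>x. (norm (ak k x - a x))\<^sup>2 \<partial>M) \<longlonglongrightarrow> 0"
    and conv_b: "(\<lambda>k. \<integral>x. (norm (bk k x - b x))\<^sup>2 \<partial>M) \<longlonglongrightarrow> 0"
  shows "(\<lambda>k. \<integral>x. ak k x \<bullet> bk k x \<partial>M) \<longlonglongrightarrow> (\<integral>x. a x \<bullet> b x \<partial>M)"
proof (rule LIM_zero_cancel, rule Lim_null_comparison)
  define dA where "dA k = sqrt (\<integral>x. (norm (ak k x - a x))\<^sup>2 \<partial>M)" for k
  define dB where "dB k = sqrt (\<integral>x. (norm (bk k x - b x))\<^sup>2 \<partial>M)" for k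
  define nA where "nA = sqrt (\<integral>x. (norm (a x))\<^sup>2 \<partial>M)"
  define nB where "nB = sqrt (\<integral>x. (norm (b x))\<^sup>2 \<partial>M)"
  have L2_diff: "integrable M (\<lambda>x. (norm (ak k x - a x))\<^sup>2)" "integrable M (\<lambda>x. (norm (bk k x - b x))\<^sup>2)"
    for k by (intro integrable_norm_sq_diff L2; measurable)+
  show "\<forall>\<^sub>F k in sequentially. norm ((\<integral>x. ak k x \<bullet> bk k x \<partial>M) - (\<integral>x. a x \<bullet> b x \<partial>M))
      \<le> dA k * dB k + dA k * nB + nA * dB k"
  proof (intro always_eventually allI)
    fix k
    have "(\<integral>x. ak k x \<bullet> bk k x \<partial>M) - (\<integral>x. a x \<bullet> b x \<partial>M)
      = (\<integral>x. (ak k x - a x) \<bullet> (bk k x - b x) + (ak k x - a x) \<bullet> b x + a x \<bullet> (bk k x - b x) \<partial>M)"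
      using L2 L2_diff[of k]
      by (simp add: integrable_inner_L2 inner_diff_left inner_diff_right flip: Bochner_Integration.integral_diff)
    also have "\<dots> = (\<integral>x. (ak k x - a x) \<bullet> (bk k x - b x) \<partial>M) + (\<integral>x. (ak k x - a x) \<bullet> b x \<partial>M)
        + (\<integral>x. a x \<bullet> (bk k x - b x) \<partial>M)"
      using L2 L2_diff[of k] by (simp add: integrable_inner_L2)
    finally show "norm ((\<integral>x. ak k x \<bullet> bk k x \<partial>M) - (\<integral>x. a x \<bullet> b x \<partial>M))
        \<le> dA k * dB k + dA k * nB + nA * dB k"
      using abs_integral_inner_le[of "\<lambda>x. ak k x - a x" M "\<lambda>x. bk k x - b x"]
        abs_integral_inner_le[of "\<lambda>x. ak k x - a x" M b] abs_integral_inner_le[of a M "\<lambda>x. bk k x - b x"]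
        L2 L2_diff[of k]
      unfolding dA_def dB_def nA_def nB_def by simp
  qed
  have "dA \<longlonglongrightarrow> 0" "dB \<longlonglongrightarrow> 0"
    unfolding dA_def[abs_def] dB_def[abs_def]
    using tendsto_real_sqrt[OF conv_a] tendsto_real_sqrt[OF conv_b] by simp_all
  then show "(\<lambda>k. dA k * dB k + dA k * nB + nA * dB k) \<longlonglongrightarrow> 0"
    by (auto intro!: tendsto_eq_intros)
qed

lemma L2_convergence_nn_integral:
  fixes F :: "nat \<Rightarrow> 'a \<Rightarrow> 'b::euclidean_space" and F0 :: "'a \<Rightarrow> 'b"
  assumes [measurable]: "\<And>k. F k \<in> borel_measurable M" "F0 \<in> borel_measurable M"
    and L2: "\<And>k. integrable M (\<lambda>x. (norm (F k x))\<^sup>2)"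
    and conv: "(\<lambda>k. \<integral>\<^sup>+x. ennreal ((norm (F k x - F0 x))\<^sup>2) \<partial>M) \<longlonglongrightarrow> 0"
  shows "integrable M (\<lambda>x. (norm (F0 x))\<^sup>2)"
    and "(\<lambda>k. \<integral>x. (norm (F k x - F0 x))\<^sup>2 \<partial>M) \<longlonglongrightarrow> 0"
proof -
  obtain N where "(\<integral>\<^sup>+x. ennreal ((norm (F N x - F0 x))\<^sup>2) \<partial>M) < 1"
    using order_tendstoD(2)[OF conv, of 1] by (auto simp: eventually_sequentially)
  then have "integrable M (\<lambda>x. (norm (F N x - F0 x))\<^sup>2)"
    by (intro integrableI_nonneg) (auto simp: less_top[symmetric] intro: order.strict_trans)
  from integrable_norm_sq_diff[OF _ _ L2[of N] this]
  show L2_F0: "integrable M (\<lambda>x. (norm (F0 x))\<^sup>2)"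
    by simp
  have "integrable M (\<lambda>x. (norm (F k x - F0 x))\<^sup>2)" for k
    by (rule integrable_norm_sq_diff) (auto intro: L2 L2_F0)
  with conv have "(\<lambda>k. ennreal (\<integral>x. (norm (F k x - F0 x))\<^sup>2 \<partial>M)) \<longlonglongrightarrow> 0"
    by (simp add: nn_integral_eq_integral)
  then show "(\<lambda>k. \<integral>x. (norm (F k x - F0 x))\<^sup>2 \<partial>M) \<longlonglongrightarrow> 0"
    by (simp add: ennreal_tendsto_0_iff)
qed

lemma L2_limit_of_Cauchy_bound:
  fixes p :: "nat \<Rightarrow> 'a \<Rightarrow> real" and u :: "'a \<Rightarrow> real"
  assumes [measurable]: "\<And>k. p k \<in> borel_measurable M" "u \<in> borel_measurable M"
    and L2: "\<And>k. integrable M (\<lambda>x. (p k x)\<^sup>2)"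
    and Cauchy: "\<And>k m. (\<integral>x. (p k x - p m x)\<^sup>2 \<partial>M) \<le> c k + c m"
    and "c \<longlonglongrightarrow> 0"
    and r: "strict_mono r" and AE_conv: "AE x in M. (\<lambda>n. p (r n) x) \<longlonglongrightarrow> u x"
  shows "integrable M (\<lambda>x. (u x)\<^sup>2)" and "(\<lambda>k. \<integral>x. (p k x - u x)\<^sup>2 \<partial>M) \<longlonglongrightarrow> 0"
proof -
  have L2_diff: "integrable M (\<lambda>x. (p k x - p m x)\<^sup>2)" for k m
    using integrable_norm_sq_diff[of "p k" M "p m"] L2 by simp
  have c_nonneg: "0 \<le> c k" for k
    using Cauchy[of k k] by simp
  have c_sub: "(\<lambda>n. c (r n)) \<longlonglongrightarrow> 0"
    using LIMSEQ_subseq_LIMSEQ[OF \<open>c \<longlonglongrightarrow> 0\<close> r] by (simp add: o_def)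
  have Fatou: "(\<integral>\<^sup>+x. ennreal ((p k x - u x)\<^sup>2) \<partial>M) \<le> ennreal (c k)" for k
  proof -
    have "(\<integral>\<^sup>+x. ennreal ((p k x - u x)\<^sup>2) \<partial>M)
        = (\<integral>\<^sup>+x. liminf (\<lambda>n. ennreal ((p k x - p (r n) x)\<^sup>2)) \<partial>M)"
      using AE_conv
    proof (intro nn_integral_cong_AE, eventually_elim)
      case (elim x)
      then have "(\<lambda>n. ennreal ((p k x - p (r n) x)\<^sup>2)) \<longlonglongrightarrow> ennreal ((p k x - u x)\<^sup>2)"
        by (intro tendsto_ennrealI tendsto_intros)
      from lim_imp_Liminf[OF trivial_limit_sequentially this] show ?case
        by (rule sym)
    qed
    also have "\<dots> \<le> liminf (\<lambda>n. \<integral>\<^sup>+x. ennreal ((p k x - p (r n) x)\<^sup>2) \<partial>M)"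
      by (rule nn_integral_liminf) measurable
    also have "\<dots> \<le> liminf (\<lambda>n. ennreal (c k + c (r n)))"
      using L2_diff Cauchy
      by (intro Liminf_mono always_eventually allI) (simp add: nn_integral_eq_integral ennreal_leI)
    also have "\<dots> = ennreal (c k)"
      using tendsto_add[OF tendsto_const[of "c k"] c_sub]
      by (intro lim_imp_Liminf tendsto_ennrealI) simp_all
    finally show ?thesis .
  qed
  have L2_limit_diff: "integrable M (\<lambda>x. (p k x - u x)\<^sup>2)" for k
    by (rule integrableI_nonneg) (use Fatou[of k] in \<open>auto intro: le_less_trans\<close>)
  from integrable_norm_sq_diff[of "p 0" M "\<lambda>x. p 0 x - u x"] L2 L2_limit_diff
  show "integrable M (\<lambda>x. (u x)\<^sup>2)"
    by simp
  have "(\<integral>x. (p k x - u x)\<^sup>2 \<partial>M) \<le> c k" for k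
    using Fatou[of k] c_nonneg[of k] L2_limit_diff[of k] by (simp add: nn_integral_eq_integral)
  then show "(\<lambda>k. \<integral>x. (p k x - u x)\<^sup>2 \<partial>M) \<longlonglongrightarrow> 0"
    by (intro tendsto_sandwich[OF _ _ tendsto_const \<open>c \<longlonglongrightarrow> 0\<close>] always_eventually) auto
qed

lemma L2_conv_imp_AE_subseq:
  fixes F :: "nat \<Rightarrow> 'a \<Rightarrow> 'b::euclidean_space"
  assumes "\<And>k. integrable M (\<lambda>x. (norm (F k x - F0 x))\<^sup>2)"
    and "(\<lambda>k. \<integral>x. (norm (F k x - F0 x))\<^sup>2 \<partial>M) \<longlonglongrightarrow> 0"
  obtains r where "strict_mono r" and "AE x in M. (\<lambda>n. F (r n) x) \<longlonglongrightarrow> F0 x"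
proof -
  obtain r where "strict_mono r" and AE_sq: "AE x in M. (\<lambda>n. (norm (F (r n) x - F0 x))\<^sup>2) \<longlonglongrightarrow> 0"
    using tendsto_L1_AE_subseq[of M "\<lambda>k x. (norm (F k x - F0 x))\<^sup>2"] assms by auto
  from AE_sq have "AE x in M. (\<lambda>n. F (r n) x) \<longlonglongrightarrow> F0 x"
  proof eventually_elim
    case (elim x)
    from tendsto_real_sqrt[OF this] have "(\<lambda>n. norm (F (r n) x - F0 x)) \<longlonglongrightarrow> 0"
      by simp
    then show ?case
      by (simp add: LIM_zero_cancel tendsto_norm_zero_iff)
  qed
  with \<open>strict_mono r\<close> show thesis by (rule that)
qed

lemma L2_conv_scaleR_imp_AE_subseq:
  fixes p :: "nat \<Rightarrow> 'a::euclidean_space \<Rightarrow> real"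
  assumes "\<And>k. integrable M (\<lambda>x. (norm (p k x *\<^sub>R x - u x *\<^sub>R x))\<^sup>2)"
    and "(\<lambda>k. \<integral>x. (norm (p k x *\<^sub>R x - u x *\<^sub>R x))\<^sup>2 \<partial>M) \<longlonglongrightarrow> 0"
    and AE_nonzero: "AE x in M. x \<noteq> 0"
  obtains r where "strict_mono r" and "AE x in M. (\<lambda>n. p (r n) x) \<longlonglongrightarrow> u x"
proof -
  obtain r where "strict_mono r" and AE_scaleR: "AE x in M. (\<lambda>n. p (r n) x *\<^sub>R x) \<longlonglongrightarrow> u x *\<^sub>R x"
    using L2_conv_imp_AE_subseq[of M "\<lambda>k x. p k x *\<^sub>R x" "\<lambda>x. u x *\<^sub>R x"] assms(1,2) by blast
  from AE_scaleR AE_nonzero have "AE x in M. (\<lambda>n. p (r n) x) \<longlonglongrightarrow> u x"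
  proof eventually_elim
    case (elim x)
    from tendsto_divide[OF tendsto_inner[OF elim(1) tendsto_const[of x]] tendsto_const[of "x \<bullet> x"]]
    show ?case
      using elim(2) by simp
  qed
  with \<open>strict_mono r\<close> show thesis by (rule that)
qed

lemma dilation_identity_Cauchy_bound:
  fixes q1 q2 :: "'a::euclidean_space \<Rightarrow> real" and F1 F2 U g :: "'a \<Rightarrow> 'a"
  assumes [measurable]: "q1 \<in> borel_measurable M" "q2 \<in> borel_measurable M"
      "F1 \<in> borel_measurable M" "F2 \<in> borel_measurable M" "U \<in> borel_measurable M"
      "g \<in> borel_measurable M" "(\<lambda>x. x) \<in> borel_measurable M"
    and L2: "integrable M (\<lambda>x. (norm (q1 x *\<^sub>R x))\<^sup>2)" "integrable M (\<lambda>x. (norm (q2 x *\<^sub>R x))\<^sup>2)"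
      "integrable M (\<lambda>x. (norm (F1 x))\<^sup>2)" "integrable M (\<lambda>x. (norm (F2 x))\<^sup>2)"
      "integrable M (\<lambda>x. (norm (U x))\<^sup>2)" "integrable M (\<lambda>x. (norm (g x))\<^sup>2)"
    and identity: "D * (\<integral>x. (q1 x - q2 x)\<^sup>2 \<partial>M)
      = -2 * (\<integral>x. (q1 x - q2 x) * ((F1 x - F2 x) \<bullet> x) \<partial>M)"
  shows "D * (\<integral>x. (q1 x - q2 x)\<^sup>2 \<partial>M)
    \<le> 2 * ((\<integral>x. (norm (q1 x *\<^sub>R x - U x))\<^sup>2 \<partial>M) + (\<integral>x. (norm (q2 x *\<^sub>R x - U x))\<^sup>2 \<partial>M)
      + (\<integral>x. (norm (F1 x - g x))\<^sup>2 \<partial>M) + (\<integral>x. (norm (F2 x - g x))\<^sup>2 \<partial>M))"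
proof -
  define a1 a2 b1 b2 where "a1 x = q1 x *\<^sub>R x - U x" and "a2 x = q2 x *\<^sub>R x - U x"
    and "b1 x = F1 x - g x" and "b2 x = F2 x - g x" for x
  have [measurable]: "a1 \<in> borel_measurable M" "a2 \<in> borel_measurable M"
    "b1 \<in> borel_measurable M" "b2 \<in> borel_measurable M"
    unfolding a1_def[abs_def] a2_def[abs_def] b1_def[abs_def] b2_def[abs_def] by measurable
  have L2_diff: "integrable M (\<lambda>x. (norm (a1 x))\<^sup>2)" "integrable M (\<lambda>x. (norm (a2 x))\<^sup>2)"
    "integrable M (\<lambda>x. (norm (b1 x))\<^sup>2)" "integrable M (\<lambda>x. (norm (b2 x))\<^sup>2)"
    unfolding a1_def a2_def b1_def b2_def by (intro integrable_norm_sq_diff L2; measurable)+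
  have "(q1 x - q2 x) * ((F1 x - F2 x) \<bullet> x) = (a1 x - a2 x) \<bullet> (b1 x - b2 x)" for x
    by (simp add: a1_def a2_def b1_def b2_def inner_commute algebra_simps)
  moreover have "-2 * ((a1 x - a2 x) \<bullet> (b1 x - b2 x))
      \<le> 2 * ((norm (a1 x))\<^sup>2 + (norm (a2 x))\<^sup>2 + (norm (b1 x))\<^sup>2 + (norm (b2 x))\<^sup>2)" for x
  proof -
    have "-2 * ((a1 x - a2 x) \<bullet> (b1 x - b2 x)) \<le> 2 * norm (a1 x - a2 x) * norm (b1 x - b2 x)"
      using Cauchy_Schwarz_ineq2[of "a1 x - a2 x" "b1 x - b2 x"] by simp
    also have "\<dots> \<le> (norm (a1 x - a2 x))\<^sup>2 + (norm (b1 x - b2 x))\<^sup>2"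
      by (rule sum_squares_bound)
    also have "\<dots> \<le> 2 * ((norm (a1 x))\<^sup>2 + (norm (a2 x))\<^sup>2 + (norm (b1 x))\<^sup>2 + (norm (b2 x))\<^sup>2)"
      using norm_diff_sq_le[of "a1 x" "a2 x"] norm_diff_sq_le[of "b1 x" "b2 x"] by simp
    finally show ?thesis .
  qed
  moreover have "integrable M (\<lambda>x. (a1 x - a2 x) \<bullet> (b1 x - b2 x))"
    using L2_diff by (intro integrable_inner_L2 integrable_norm_sq_diff; measurable)
  ultimately have "(\<integral>x. -2 * ((q1 x - q2 x) * ((F1 x - F2 x) \<bullet> x)) \<partial>M)
      \<le> (\<integral>x. 2 * ((norm (a1 x))\<^sup>2 + (norm (a2 x))\<^sup>2 + (norm (b1 x))\<^sup>2 + (norm (b2 x))\<^sup>2) \<partial>M)"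
    using L2_diff by (intro integral_mono) auto
  with identity L2_diff show ?thesis
    by (simp add: a1_def a2_def b1_def b2_def)
qed

lemma L2_conv_of_dilation_identity_diff:
  fixes p :: "nat \<Rightarrow> 'a::euclidean_space \<Rightarrow> real" and f :: "nat \<Rightarrow> 'a \<Rightarrow> 'a"
    and u :: "'a \<Rightarrow> real" and g :: "'a \<Rightarrow> 'a"
  assumes [measurable]: "\<And>k. p k \<in> borel_measurable M" "\<And>k. f k \<in> borel_measurable M"
      "u \<in> borel_measurable M" "g \<in> borel_measurable M" "(\<lambda>x. x) \<in> borel_measurable M"
    and L2: "\<And>k. integrable M (\<lambda>x. (p k x)\<^sup>2)" "\<And>k. integrable M (\<lambda>x. (norm (p k x *\<^sub>R x))\<^sup>2)"
      "\<And>k. integrable M (\<lambda>x. (norm (f k x))\<^sup>2)" "integrable M (\<lambda>x. (norm (u x *\<^sub>R x))\<^sup>2)"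
      "integrable M (\<lambda>x. (norm (g x))\<^sup>2)"
    and conv_f: "(\<lambda>k. \<integral>x. (norm (f k x - g x))\<^sup>2 \<partial>M) \<longlonglongrightarrow> 0"
    and conv_p: "(\<lambda>k. \<integral>x. (norm (p k x *\<^sub>R x - u x *\<^sub>R x))\<^sup>2 \<partial>M) \<longlonglongrightarrow> 0"
    and "0 < D"
    and identity_diff: "\<And>k m. D * (\<integral>x. (p k x - p m x)\<^sup>2 \<partial>M)
      = -2 * (\<integral>x. (p k x - p m x) * ((f k x - f m x) \<bullet> x) \<partial>M)"
    and AE_nonzero: "AE x in M. x \<noteq> 0"
  shows "integrable M (\<lambda>x. (u x)\<^sup>2)" and "(\<lambda>k. \<integral>x. (p k x - u x)\<^sup>2 \<partial>M) \<longlonglongrightarrow> 0"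
proof -
  define c where "c k = 2 / D * ((\<integral>x. (norm (f k x - g x))\<^sup>2 \<partial>M)
    + (\<integral>x. (norm (p k x *\<^sub>R x - u x *\<^sub>R x))\<^sup>2 \<partial>M))" for k
  have "c \<longlonglongrightarrow> 2 / D * (0 + 0)"
    unfolding c_def[abs_def] by (intro tendsto_intros conv_f conv_p)
  then have c: "c \<longlonglongrightarrow> 0" by simp
  have Cauchy: "(\<integral>x. (p k x - p m x)\<^sup>2 \<partial>M) \<le> c k + c m" for k m
  proof -
    have "D * (\<integral>x. (p k x - p m x)\<^sup>2 \<partial>M) \<le> D * (c k + c m)"
      using dilation_identity_Cauchy_bound[OF _ _ _ _ _ _ _ L2(2) L2(2) L2(3) L2(3) L2(4,5)
          identity_diff[of k m]] \<open>0 < D\<close>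
      unfolding c_def by (simp add: algebra_simps)
    with \<open>0 < D\<close> show ?thesis
      by simp
  qed
  have "integrable M (\<lambda>x. (norm (p k x *\<^sub>R x - u x *\<^sub>R x))\<^sup>2)" for k
    using L2 by (intro integrable_norm_sq_diff) auto
  then obtain r where r: "strict_mono r" and AE_conv: "AE x in M. (\<lambda>n. p (r n) x) \<longlonglongrightarrow> u x"
    using L2_conv_scaleR_imp_AE_subseq[OF _ conv_p AE_nonzero] by blast
  show "integrable M (\<lambda>x. (u x)\<^sup>2)" and "(\<lambda>k. \<integral>x. (p k x - u x)\<^sup>2 \<partial>M) \<longlonglongrightarrow> 0"
    using L2_limit_of_Cauchy_bound[OF _ _ L2(1) Cauchy c r AE_conv] by simp_all
qed

lemma dilation_identity_limit:
  fixes p :: "nat \<Rightarrow> 'a::euclidean_space \<Rightarrow> real" and f :: "nat \<Rightarrow> 'a \<Rightarrow> 'a"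
    and u :: "'a \<Rightarrow> real" and g :: "'a \<Rightarrow> 'a"
  assumes meas [measurable]: "\<And>k. p k \<in> borel_measurable M" "\<And>k. f k \<in> borel_measurable M"
      "u \<in> borel_measurable M" "g \<in> borel_measurable M" "(\<lambda>x. x) \<in> borel_measurable M"
    and L2: "\<And>k. integrable M (\<lambda>x. (p k x)\<^sup>2)" "\<And>k. integrable M (\<lambda>x. (norm (p k x *\<^sub>R x))\<^sup>2)"
      "\<And>k. integrable M (\<lambda>x. (norm (f k x))\<^sup>2)"
    and conv_f: "(\<lambda>k. \<integral>\<^sup>+x. ennreal ((norm (f k x - g x))\<^sup>2) \<partial>M) \<longlonglongrightarrow> 0"
    and conv_p: "(\<lambda>k. \<integral>\<^sup>+x. ennreal ((norm (p k x *\<^sub>R x - u x *\<^sub>R x))\<^sup>2) \<partial>M) \<longlonglongrightarrow> 0"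
    and "0 < D"
    and identity: "\<And>k. D * (\<integral>x. (p k x)\<^sup>2 \<partial>M) = -2 * (\<integral>x. p k x * (f k x \<bullet> x) \<partial>M)"
    and identity_diff: "\<And>k m. D * (\<integral>x. (p k x - p m x)\<^sup>2 \<partial>M)
      = -2 * (\<integral>x. (p k x - p m x) * ((f k x - f m x) \<bullet> x) \<partial>M)"
    and AE_nonzero: "AE x in M. x \<noteq> 0"
  shows "integrable M (\<lambda>x. (u x)\<^sup>2)" and "integrable M (\<lambda>x. (norm (g x))\<^sup>2)"
    and "integrable M (\<lambda>x. (norm (u x *\<^sub>R x))\<^sup>2)"
    and "D * (\<integral>x. (u x)\<^sup>2 \<partial>M) = -2 * (\<integral>x. (u x *\<^sub>R x) \<bullet> g x \<partial>M)"
proof -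
  have L2_g: "integrable M (\<lambda>x. (norm (g x))\<^sup>2)"
    and conv_f': "(\<lambda>k. \<integral>x. (norm (f k x - g x))\<^sup>2 \<partial>M) \<longlonglongrightarrow> 0"
    using L2_convergence_nn_integral[OF _ _ L2(3) conv_f] by simp_all
  have L2_U: "integrable M (\<lambda>x. (norm (u x *\<^sub>R x))\<^sup>2)"
    and conv_p': "(\<lambda>k. \<integral>x. (norm (p k x *\<^sub>R x - u x *\<^sub>R x))\<^sup>2 \<partial>M) \<longlonglongrightarrow> 0"
    using L2_convergence_nn_integral[of "\<lambda>k x. p k x *\<^sub>R x" M "\<lambda>x. u x *\<^sub>R x", OF _ _ L2(2) conv_p]
    by simp_all
  show "integrable M (\<lambda>x. (norm (g x))\<^sup>2)" "integrable M (\<lambda>x. (norm (u x *\<^sub>R x))\<^sup>2)"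
    by (fact L2_g L2_U)+
  note p_to_u = L2_conv_of_dilation_identity_diff[OF meas L2 L2_U L2_g conv_f' conv_p' \<open>0 < D\<close>
      identity_diff AE_nonzero]
  show L2_u: "integrable M (\<lambda>x. (u x)\<^sup>2)"
    by (fact p_to_u(1))
  have "(\<lambda>k. D * (\<integral>x. p k x \<bullet> p k x \<partial>M)) \<longlonglongrightarrow> D * (\<integral>x. u x \<bullet> u x \<partial>M)"
    using L2(1) L2_u p_to_u(2)
    by (intro tendsto_mult_left tendsto_integral_inner_L2) (simp_all add: power2_eq_square)
  moreover have "(\<lambda>k. -2 * (\<integral>x. (p k x *\<^sub>R x) \<bullet> f k x \<partial>M)) \<longlonglongrightarrow> -2 * (\<integral>x. (u x *\<^sub>R x) \<bullet> g x \<partial>M)"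
    using L2 L2_g L2_U conv_f' conv_p'
    by (intro tendsto_mult_left tendsto_integral_inner_L2) simp_all
  moreover have "D * (\<integral>x. p k x \<bullet> p k x \<partial>M) = -2 * (\<integral>x. (p k x *\<^sub>R x) \<bullet> f k x \<partial>M)" for k
    using identity[of k] by (simp add: power2_eq_square inner_commute)
  ultimately show "D * (\<integral>x. (u x)\<^sup>2 \<partial>M) = -2 * (\<integral>x. (u x *\<^sub>R x) \<bullet> g x \<partial>M)"
    by (simp add: LIMSEQ_unique power2_eq_square)
qed

section \<open>The weight x^A on R^N_*\<close>

definition weight :: "real^'n \<Rightarrow> real^'n \<Rightarrow> real" where
  "weight \<alpha> x = indicator (Rstar \<alpha>) x * wA \<alpha> x"

lemma open_Rstar: "open (Rstar \<alpha>)"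
proof -
  have "Rstar \<alpha> = (\<Inter>i\<in>{i. 0 < \<alpha>$i}. {x. 0 < x$i})"
    unfolding Rstar_def by auto
  then show ?thesis
    by (auto simp: open_halfspace_component_gt_cart)
qed

lemma Rstar_borel [measurable]: "Rstar \<alpha> \<in> sets borel"
  using open_Rstar by (rule borel_open)

lemma borel_measurable_weight [measurable]: "weight \<alpha> \<in> borel_measurable borel"
  unfolding weight_def wA_def by measurable

lemma weight_nonneg: "0 \<le> weight \<alpha> x"
  unfolding weight_def wA_def by (auto intro!: mult_nonneg_nonneg prod_nonneg)

lemma Rstar_scaleR_iff: "0 < t \<Longrightarrow> t *\<^sub>R x \<in> Rstar \<alpha> \<longleftrightarrow> x \<in> Rstar \<alpha>"
  unfolding Rstar_def by (auto simp: zero_less_mult_iff)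

lemma weight_scaleR:
  assumes "\<forall>i. 0 \<le> \<alpha>$i" and "0 < t"
  shows "weight \<alpha> (t *\<^sub>R x) = t powr (\<Sum>i\<in>UNIV. \<alpha>$i) * weight \<alpha> x"
proof (cases "x \<in> Rstar \<alpha>")
  case True
  have "(if \<alpha>$i = 0 then 1 else (t *\<^sub>R x)$i powr \<alpha>$i)
      = t powr \<alpha>$i * (if \<alpha>$i = 0 then 1 else x$i powr \<alpha>$i)" for i
    using True assms unfolding Rstar_def by (force simp: powr_mult)
  then have "wA \<alpha> (t *\<^sub>R x) = t powr (\<Sum>i\<in>UNIV. \<alpha>$i) * wA \<alpha> x"
    unfolding wA_def using \<open>0 < t\<close> by (simp add: prod.distrib powr_sum)
  then show ?thesis
    using True assms(2) by (simp add: weight_def Rstar_scaleR_iff)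
qed (use assms(2) in \<open>simp add: weight_def Rstar_scaleR_iff\<close>)

lemma weight_le_on_ball:
  assumes "\<forall>i. 0 \<le> \<alpha>$i" and "norm x \<le> R"
  shows "weight \<alpha> x \<le> (\<Prod>i\<in>UNIV. if \<alpha>$i = 0 then 1 else R powr \<alpha>$i)"
proof (cases "x \<in> Rstar \<alpha>")
  case True
  have "0 \<le> x$i" if "\<alpha>$i \<noteq> 0" for i
  proof -
    have "0 < \<alpha>$i"
      using assms(1)[rule_format, of i] that by linarith
    with True show ?thesis
      unfolding Rstar_def by (simp add: less_imp_le)
  qed
  moreover have "x$i \<le> R" for i
    using component_le_norm_cart[of x i] abs_ge_self[of "x$i"] assms(2) by linarith
  ultimately have "wA \<alpha> x \<le> (\<Prod>i\<in>UNIV. if \<alpha>$i = 0 then 1 else R powr \<alpha>$i)"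
    unfolding wA_def using assms(1) by (intro prod_mono) (auto intro!: powr_mono2)
  then show ?thesis
    using True by (simp add: weight_def)
qed (auto simp: weight_def intro!: prod_nonneg)

lemma homogeneous_weight_weight:
  assumes "\<forall>i. 0 \<le> \<alpha>$i"
  shows "homogeneous_weight (weight \<alpha>) (\<Sum>i\<in>UNIV. \<alpha>$i)"
proof
  fix R :: real
  define K where "K = (\<Prod>i\<in>UNIV. if \<alpha>$i = 0 then 1 else R powr \<alpha>$i)"
  show "integrable lborel (\<lambda>x. indicator (ball 0 R) x * weight \<alpha> x)"
  proof (rule Bochner_Integration.integrable_bound)
    show "integrable lborel (\<lambda>x::real^'n. K * indicator (ball 0 R) x)"
      using emeasure_bounded_finite[of "ball (0::real^'n) R"]
      by (intro integrable_mult_right integrable_real_indicator) (auto simp: top.not_eq_extremum)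
    show "AE x in lborel. norm (indicator (ball 0 R) x * weight \<alpha> x) \<le> norm (K * indicator (ball 0 R) x)"
      using weight_le_on_ball[OF assms, of _ R] weight_nonneg[of \<alpha>]
      by (intro AE_I2) (auto simp: K_def indicator_def intro: order_trans[OF _ abs_ge_self])
  qed (auto intro!: borel_measurable_times borel_measurable_indicator)
qed (simp_all add: weight_nonneg weight_scaleR assms)

definition weighted_lborel :: "real^'n \<Rightarrow> (real^'n) measure" where
  "weighted_lborel \<alpha> = density lborel (weight \<alpha>)"

lemma sets_weighted_lborel [simp, measurable_cong]: "sets (weighted_lborel \<alpha>) = sets borel"
  by (simp add: weighted_lborel_def)

lemma integrable_weighted_lborel_iff:
  fixes f :: "real^'n \<Rightarrow> real"
  assumes "f \<in> borel_measurable borel"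
  shows "integrable (weighted_lborel \<alpha>) f \<longleftrightarrow> integrable lborel (\<lambda>x. weight \<alpha> x * f x)"
  unfolding weighted_lborel_def using assms weight_nonneg by (subst integrable_density) auto

lemma integral_weighted_lborel:
  fixes f :: "real^'n \<Rightarrow> real"
  assumes "f \<in> borel_measurable borel"
  shows "(\<integral>x. f x \<partial>weighted_lborel \<alpha>) = (\<integral>x. weight \<alpha> x * f x \<partial>lborel)"
  unfolding weighted_lborel_def using assms weight_nonneg by (subst integral_density) auto

lemma set_integral_eq_weighted_lborel:
  fixes f :: "real^'n \<Rightarrow> real"
  assumes "f \<in> borel_measurable borel"
  shows "(LINT x:Rstar \<alpha>|lborel. f x * wA \<alpha> x) = (\<integral>x. f x \<partial>weighted_lborel \<alpha>)"
  unfolding integral_weighted_lborel[OF assms] set_lebesgue_integral_def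
  by (intro Bochner_Integration.integral_cong) (simp_all add: weight_def)

lemma set_nn_integral_eq_weighted_lborel:
  fixes f :: "real^'n \<Rightarrow> real"
  assumes "f \<in> borel_measurable borel" and "\<And>x. 0 \<le> f x"
  shows "(\<integral>\<^sup>+x\<in>Rstar \<alpha>. ennreal (f x * wA \<alpha> x) \<partial>lborel) = (\<integral>\<^sup>+x. ennreal (f x) \<partial>weighted_lborel \<alpha>)"
  unfolding weighted_lborel_def using assms
  by (subst nn_integral_density; (measurable)?)
    (auto intro!: nn_integral_cong simp: weight_def indicator_def ennreal_mult' mult.commute weight_nonneg)

lemma AE_weighted_lborel_nonzero: "AE x in weighted_lborel \<alpha>. x \<noteq> 0"
  unfolding weighted_lborel_def using AE_lborel_singleton[of 0]
  by (subst AE_density) (auto elim: eventually_mono)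

lemma Nstar_differentiable: "\<phi> \<in> Nstar \<alpha> \<Longrightarrow> \<phi> differentiable (at x)"
  using dpart.simps(1) unfolding Nstar_def smooth_def by (metis (mono_tags, lifting) mem_Collect_eq)

lemma has_derivative_grad:
  assumes "\<phi> differentiable (at x)"
  shows "(\<phi> has_derivative (\<lambda>v. grad \<phi> x \<bullet> v)) (at x)"
proof -
  define \<phi>' where "\<phi>' = frechet_derivative \<phi> (at x)"
  have der: "(\<phi> has_derivative \<phi>') (at x)"
    using assms unfolding \<phi>'_def by (simp add: frechet_derivative_works)
  then have lin: "linear \<phi>'"
    by (rule has_derivative_linear)
  have "((\<lambda>t. \<phi> (x + t *\<^sub>R axis i 1)) has_real_derivative \<phi>' (axis i 1)) (at 0)" for i
  proof -
    have "((\<lambda>t. \<phi> (x + t *\<^sub>R axis i 1)) has_derivative (\<lambda>t. \<phi>' (t *\<^sub>R axis i 1))) (at 0)"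
      by (rule has_derivative_compose[where g=\<phi>]) (use der in \<open>auto intro!: derivative_eq_intros\<close>)
    then show ?thesis
      by (simp add: has_field_derivative_def linear_scale[OF lin] mult_commute_abs)
  qed
  then have partial: "dpart1 i \<phi> x = \<phi>' (axis i 1)" for i
    unfolding dpart1_def by (rule DERIV_imp_deriv)
  have "\<phi>' = (\<lambda>v. grad \<phi> x \<bullet> v)"
  proof (rule ext)
    fix v
    have "\<phi>' v = \<phi>' (\<Sum>i\<in>UNIV. v$i *\<^sub>R axis i 1)"
      using basis_expansion[of v] by (simp add: scalar_mult_eq_scaleR)
    also have "\<dots> = grad \<phi> x \<bullet> v"
      by (simp add: linear_sum[OF lin] linear_scale[OF lin] grad_def inner_vec_def partial mult.commute)
    finally show "\<phi>' v = grad \<phi> x \<bullet> v" .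
  qed
  with der show ?thesis
    by simp
qed

lemma continuous_on_grad:
  assumes "\<phi> \<in> Nstar \<alpha>"
  shows "continuous_on UNIV (grad \<phi>)"
proof -
  have "dpart1 i \<phi> differentiable (at x)" for i x
    using assms dpart.simps(2)[of i "[]"] unfolding Nstar_def smooth_def
    by (metis (mono_tags, lifting) mem_Collect_eq dpart.simps(1))
  then have "continuous_on UNIV (dpart1 i \<phi>)" for i
    by (meson continuous_at_imp_continuous_on differentiable_imp_continuous_within)
  then show ?thesis
    unfolding grad_def[abs_def] by (rule continuous_on_vec_lambda)
qed

lemma Nstar_vanishes_outside_ball:
  assumes "\<phi> \<in> Nstar \<alpha>"
  obtains R where "\<And>x. R \<le> norm x \<Longrightarrow> \<phi> x = 0" and "\<And>x. R \<le> norm x \<Longrightarrow> grad \<phi> x = 0"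
proof -
  have "bounded (closure {x. \<phi> x \<noteq> 0})"
    using assms unfolding Nstar_def by (auto intro: compact_imp_bounded)
  then obtain R where R: "\<And>y. y \<in> closure {x. \<phi> x \<noteq> 0} \<Longrightarrow> norm y \<le> R"
    by (auto simp: bounded_iff)
  have zero: "\<phi> y = 0" if "R < norm y" for y
    using R[of y] closure_subset[of "{x. \<phi> x \<noteq> 0}"] that by force
  have "grad \<phi> x = 0" if "R + 1 \<le> norm x" for x
  proof -
    have "(\<phi> has_derivative (\<lambda>_. 0)) (at x)"
    proof (rule has_derivative_transform_within_open)
      show "open {y. R < norm y}"
        by (intro open_Collect_less continuous_intros)
      show "((\<lambda>_. 0) has_derivative (\<lambda>_. 0)) (at x)" "x \<in> {y. R < norm y}"
        using that by auto
    qed (use zero in auto)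
    from has_derivative_unique[OF has_derivative_grad[OF Nstar_differentiable[OF assms]] this]
    have "grad \<phi> x \<bullet> grad \<phi> x = 0"
      by metis
    then show ?thesis
      by simp
  qed
  with zero show thesis
    by (intro that[of "R + 1"]) auto
qed

lemma Nstar_regular:
  assumes "\<phi> \<in> Nstar \<alpha>"
  shows "\<And>x. (\<phi> has_derivative (\<lambda>v. grad \<phi> x \<bullet> v)) (at x)"
    and "continuous_on UNIV \<phi>" and "continuous_on UNIV (grad \<phi>)"
  using has_derivative_grad[OF Nstar_differentiable[OF assms]] continuous_on_grad[OF assms]
  by (auto intro: continuous_at_imp_continuous_on has_derivative_continuous)

lemma weighted_lborel_dilation_identity:
  fixes \<psi> :: "real^'n \<Rightarrow> real"
  assumes "\<forall>i. 0 \<le> \<alpha>$i"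
    and der: "\<And>x. (\<psi> has_derivative (\<lambda>v. G x \<bullet> v)) (at x)"
    and cont: "continuous_on UNIV G"
    and supp: "\<And>x. R \<le> norm x \<Longrightarrow> \<psi> x = 0"
  shows "(CARD('n) + (\<Sum>i\<in>UNIV. \<alpha>$i)) * (\<integral>x. (\<psi> x)\<^sup>2 \<partial>weighted_lborel \<alpha>)
    = -2 * (\<integral>x. \<psi> x * (G x \<bullet> x) \<partial>weighted_lborel \<alpha>)"
proof -
  interpret homogeneous_weight "weight \<alpha>" "\<Sum>i\<in>UNIV. \<alpha>$i"
    using assms(1) by (rule homogeneous_weight_weight)
  have [measurable]: "\<psi> \<in> borel_measurable borel" "G \<in> borel_measurable borel"
    using der cont by (auto intro!: borel_measurable_continuous_onI
        continuous_at_imp_continuous_on has_derivative_continuous)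
  show ?thesis
    using dilation_identity[OF der cont supp] by (simp add: integral_weighted_lborel)
qed

lemma Nstar_square_integrable:
  assumes "\<forall>i. 0 \<le> \<alpha>$i" and "\<phi> \<in> Nstar \<alpha>"
  shows "integrable (weighted_lborel \<alpha>) (\<lambda>x. (\<phi> x)\<^sup>2)"
    and "integrable (weighted_lborel \<alpha>) (\<lambda>x. (norm (\<phi> x *\<^sub>R x))\<^sup>2)"
    and "integrable (weighted_lborel \<alpha>) (\<lambda>x. (norm (grad \<phi> x))\<^sup>2)"
proof -
  interpret homogeneous_weight "weight \<alpha>" "\<Sum>i\<in>UNIV. \<alpha>$i"
    using assms(1) by (rule homogeneous_weight_weight)
  obtain R where R: "\<And>x. R \<le> norm x \<Longrightarrow> \<phi> x = 0" "\<And>x. R \<le> norm x \<Longrightarrow> grad \<phi> x = 0"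
    using Nstar_vanishes_outside_ball[OF assms(2)] by blast
  note cont = Nstar_regular(2,3)[OF assms(2)]
  then have [measurable]: "\<phi> \<in> borel_measurable borel" "grad \<phi> \<in> borel_measurable borel"
    by (auto intro: borel_measurable_continuous_onI)
  show "integrable (weighted_lborel \<alpha>) (\<lambda>x. (\<phi> x)\<^sup>2)"
    "integrable (weighted_lborel \<alpha>) (\<lambda>x. (norm (\<phi> x *\<^sub>R x))\<^sup>2)"
    "integrable (weighted_lborel \<alpha>) (\<lambda>x. (norm (grad \<phi> x))\<^sup>2)"
    by (simp_all add: integrable_weighted_lborel_iff)
      (intro integrable_mult_continuous_support[where R=R] continuous_intros cont; simp add: R)+
qed

lemma Nstar_dilation_identity:
  fixes \<alpha> :: "real^'n"
  assumes "\<forall>i. 0 \<le> \<alpha>$i" and "\<phi> \<in> Nstar \<alpha>"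
  shows "(CARD('n) + (\<Sum>i\<in>UNIV. \<alpha>$i)) * (\<integral>x. (\<phi> x)\<^sup>2 \<partial>weighted_lborel \<alpha>)
    = -2 * (\<integral>x. \<phi> x * (grad \<phi> x \<bullet> x) \<partial>weighted_lborel \<alpha>)"
proof -
  obtain R where "\<And>x. R \<le> norm x \<Longrightarrow> \<phi> x = 0"
    using Nstar_vanishes_outside_ball[OF assms(2)] by blast
  with Nstar_regular[OF assms(2)] show ?thesis
    by (intro weighted_lborel_dilation_identity[OF assms(1)])
qed

lemma Nstar_diff_dilation_identity:
  fixes \<alpha> :: "real^'n"
  assumes "\<forall>i. 0 \<le> \<alpha>$i" and "\<phi> \<in> Nstar \<alpha>" and "\<phi>' \<in> Nstar \<alpha>"
  shows "(CARD('n) + (\<Sum>i\<in>UNIV. \<alpha>$i)) * (\<integral>x. (\<phi> x - \<phi>' x)\<^sup>2 \<partial>weighted_lborel \<alpha>)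
    = -2 * (\<integral>x. (\<phi> x - \<phi>' x) * ((grad \<phi> x - grad \<phi>' x) \<bullet> x) \<partial>weighted_lborel \<alpha>)"
proof -
  obtain R R' where "\<And>x. R \<le> norm x \<Longrightarrow> \<phi> x = 0" "\<And>x. R' \<le> norm x \<Longrightarrow> \<phi>' x = 0"
    using Nstar_vanishes_outside_ball[OF assms(2)] Nstar_vanishes_outside_ball[OF assms(3)] by metis
  then have "\<phi> x - \<phi>' x = 0" if "max R R' \<le> norm x" for x
    using that by simp
  moreover have "((\<lambda>x. \<phi> x - \<phi>' x) has_derivative (\<lambda>v. (grad \<phi> x - grad \<phi>' x) \<bullet> v)) (at x)" for x
    using has_derivative_diff[OF Nstar_regular(1)[OF assms(2)] Nstar_regular(1)[OF assms(3)]]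
    by (simp add: inner_diff_left)
  ultimately show ?thesis
    using Nstar_regular(3)[OF assms(2)] Nstar_regular(3)[OF assms(3)]
    by (intro weighted_lborel_dilation_identity[OF assms(1)] continuous_intros)
qed

lemma SA_dilation_identity:
  fixes \<alpha> :: "real^'n" and u :: "real^'n \<Rightarrow> real" and g :: "real^'n \<Rightarrow> real^'n"
  assumes \<alpha>: "\<forall>i. 0 \<le> \<alpha>$i" and "(u, g) \<in> SA \<alpha>"
  shows "integrable (weighted_lborel \<alpha>) (\<lambda>x. (u x)\<^sup>2)"
    and "integrable (weighted_lborel \<alpha>) (\<lambda>x. (norm (g x))\<^sup>2)"
    and "integrable (weighted_lborel \<alpha>) (\<lambda>x. (norm (u x *\<^sub>R x))\<^sup>2)"
    and "(CARD('n) + (\<Sum>i\<in>UNIV. \<alpha>$i)) * (\<integral>x. (u x)\<^sup>2 \<partial>weighted_lborel \<alpha>)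
      = -2 * (\<integral>x. (u x *\<^sub>R x) \<bullet> g x \<partial>weighted_lborel \<alpha>)"
proof -
  obtain \<phi> :: "nat \<Rightarrow> real^'n \<Rightarrow> real" where
    "u \<in> borel_measurable lborel" "g \<in> borel_measurable lborel" and \<phi>: "\<And>k. \<phi> k \<in> Nstar \<alpha>"
    and conv_grad: "(\<lambda>k. \<integral>\<^sup>+x\<in>Rstar \<alpha>. ennreal ((norm (grad (\<phi> k) x - g x))\<^sup>2 * wA \<alpha> x) \<partial>lborel)
      \<longlonglongrightarrow> 0"
    and conv_u: "(\<lambda>k. \<integral>\<^sup>+x\<in>Rstar \<alpha>. ennreal ((\<phi> k x - u x)\<^sup>2 * (norm x)\<^sup>2 * wA \<alpha> x) \<partial>lborel)
      \<longlonglongrightarrow> 0"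
    using assms(2) unfolding SA_def by auto
  then have [measurable]: "u \<in> borel_measurable borel" "g \<in> borel_measurable borel"
    by simp_all
  have [measurable]: "\<phi> k \<in> borel_measurable borel" "grad (\<phi> k) \<in> borel_measurable borel" for k
    using Nstar_regular(2,3)[OF \<phi>] by (auto intro: borel_measurable_continuous_onI)
  have conv_grad': "(\<lambda>k. \<integral>\<^sup>+x. ennreal ((norm (grad (\<phi> k) x - g x))\<^sup>2) \<partial>weighted_lborel \<alpha>)
      \<longlonglongrightarrow> 0"
    using conv_grad by (subst (asm) set_nn_integral_eq_weighted_lborel) auto
  have conv_u': "(\<lambda>k. \<integral>\<^sup>+x. ennreal ((norm (\<phi> k x *\<^sub>R x - u x *\<^sub>R x))\<^sup>2) \<partial>weighted_lborel \<alpha>)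
      \<longlonglongrightarrow> 0"
    using conv_u by (subst (asm) set_nn_integral_eq_weighted_lborel)
      (auto simp: power_mult_distrib mult.commute simp flip: scaleR_diff_left)
  have "0 < CARD('n) + (\<Sum>i\<in>UNIV. \<alpha>$i)"
    using \<alpha> by (simp add: add_pos_nonneg sum_nonneg)
  from dilation_identity_limit[OF _ _ _ _ _ Nstar_square_integrable[OF \<alpha> \<phi>] conv_grad' conv_u' this
      Nstar_dilation_identity[OF \<alpha> \<phi>] Nstar_diff_dilation_identity[OF \<alpha> \<phi> \<phi>]
      AE_weighted_lborel_nonzero]
  show "integrable (weighted_lborel \<alpha>) (\<lambda>x. (u x)\<^sup>2)"
    "integrable (weighted_lborel \<alpha>) (\<lambda>x. (norm (g x))\<^sup>2)"
    "integrable (weighted_lborel \<alpha>) (\<lambda>x. (norm (u x *\<^sub>R x))\<^sup>2)"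
    "(CARD('n) + (\<Sum>i\<in>UNIV. \<alpha>$i)) * (\<integral>x. (u x)\<^sup>2 \<partial>weighted_lborel \<alpha>)
      = -2 * (\<integral>x. (u x *\<^sub>R x) \<bullet> g x \<partial>weighted_lborel \<alpha>)"
    by measurable
qed

section \<open>Completing the square\<close>

lemma gaussian_conjugate_norm_sq:
  fixes g x :: "'a::real_inner" and v L :: real
  shows "(norm (exp ((norm x)\<^sup>2 / (2 * L\<^sup>2)) *\<^sub>R g + (v * exp ((norm x)\<^sup>2 / (2 * L\<^sup>2)) / L\<^sup>2) *\<^sub>R x))\<^sup>2
      * exp (- (norm x)\<^sup>2 / L\<^sup>2)
    = (norm g)\<^sup>2 + 2 / L\<^sup>2 * ((v *\<^sub>R x) \<bullet> g) + (norm (v *\<^sub>R x))\<^sup>2 / (L\<^sup>2)\<^sup>2"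
proof -
  define e where "e = exp ((norm x)\<^sup>2 / (2 * L\<^sup>2))"
  define c where "c = 1 / L\<^sup>2"
  have "e *\<^sub>R g + (v * e / L\<^sup>2) *\<^sub>R x = e *\<^sub>R (g + c *\<^sub>R (v *\<^sub>R x))"
    by (simp add: c_def scaleR_add_right)
  then have "(norm (e *\<^sub>R g + (v * e / L\<^sup>2) *\<^sub>R x))\<^sup>2 * exp (- (norm x)\<^sup>2 / L\<^sup>2)
      = (e\<^sup>2 * exp (- (norm x)\<^sup>2 / L\<^sup>2)) * (norm (g + c *\<^sub>R (v *\<^sub>R x)))\<^sup>2"
    by (simp add: e_def power_mult_distrib)
  also have "e\<^sup>2 * exp (- (norm x)\<^sup>2 / L\<^sup>2) = 1"
    unfolding e_def by (simp add: power2_eq_square flip: exp_add)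
  also have "(norm (g + c *\<^sub>R (v *\<^sub>R x)))\<^sup>2
      = (norm g)\<^sup>2 + 2 * c * ((v *\<^sub>R x) \<bullet> g) + c\<^sup>2 * (norm (v *\<^sub>R x))\<^sup>2"
    by (simp only: power2_norm_eq_inner)
      (simp add: inner_commute power2_eq_square algebra_simps)
  finally show ?thesis
    by (simp add: e_def c_def power_divide)
qed

lemma set_integral_gaussian_conjugate_norm_sq:
  fixes \<alpha> :: "real^'n" and u :: "real^'n \<Rightarrow> real" and g :: "real^'n \<Rightarrow> real^'n"
  assumes [measurable]: "u \<in> borel_measurable borel" "g \<in> borel_measurable borel"
    and "integrable (weighted_lborel \<alpha>) (\<lambda>x. (norm (g x))\<^sup>2)"
    and "integrable (weighted_lborel \<alpha>) (\<lambda>x. (norm (u x *\<^sub>R x))\<^sup>2)"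
  shows "(LINT x:Rstar \<alpha>|lborel.
        (norm (exp ((norm x)\<^sup>2 / (2 * L\<^sup>2)) *\<^sub>R g x + (u x * exp ((norm x)\<^sup>2 / (2 * L\<^sup>2)) / L\<^sup>2) *\<^sub>R x))\<^sup>2
        * exp (- (norm x)\<^sup>2 / L\<^sup>2) * wA \<alpha> x)
    = (\<integral>x. (norm (g x))\<^sup>2 \<partial>weighted_lborel \<alpha>) + 2 / L\<^sup>2 * (\<integral>x. (u x *\<^sub>R x) \<bullet> g x \<partial>weighted_lborel \<alpha>)
      + (\<integral>x. (norm (u x *\<^sub>R x))\<^sup>2 \<partial>weighted_lborel \<alpha>) / (L\<^sup>2)\<^sup>2"
proof -
  have "(LINT x:Rstar \<alpha>|lborel.
        (norm (exp ((norm x)\<^sup>2 / (2 * L\<^sup>2)) *\<^sub>R g x + (u x * exp ((norm x)\<^sup>2 / (2 * L\<^sup>2)) / L\<^sup>2) *\<^sub>R x))\<^sup>2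
        * exp (- (norm x)\<^sup>2 / L\<^sup>2) * wA \<alpha> x)
      = (\<integral>x. (norm (g x))\<^sup>2 + 2 / L\<^sup>2 * ((u x *\<^sub>R x) \<bullet> g x) + (norm (u x *\<^sub>R x))\<^sup>2 / (L\<^sup>2)\<^sup>2
          \<partial>weighted_lborel \<alpha>)"
    unfolding gaussian_conjugate_norm_sq by (rule set_integral_eq_weighted_lborel) measurable
  also have "\<dots> = (\<integral>x. (norm (g x))\<^sup>2 \<partial>weighted_lborel \<alpha>)
      + 2 / L\<^sup>2 * (\<integral>x. (u x *\<^sub>R x) \<bullet> g x \<partial>weighted_lborel \<alpha>)
      + (\<integral>x. (norm (u x *\<^sub>R x))\<^sup>2 \<partial>weighted_lborel \<alpha>) / (L\<^sup>2)\<^sup>2"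
    using assms(3,4) integrable_inner_L2[OF _ _ assms(4,3)] by simp
  finally show ?thesis .
qed

lemma sqrt_mult_add_eq_balanced_sum:
  fixes I1 I2 J :: real
  assumes "0 \<le> I1" "0 \<le> I2" "\<bar>J\<bar> \<le> sqrt I1 * sqrt I2"
  defines "lam \<equiv> (I2 / I1) powr (1/4)"
  shows "sqrt I1 * sqrt I2 + J = lam\<^sup>2 / 2 * (I1 + 2 / lam\<^sup>2 * J + I2 / (lam\<^sup>2)\<^sup>2)"
proof (cases "I1 = 0 \<or> I2 = 0")
  case True
  then show ?thesis
    using assms(3) by (auto simp: lam_def)
next
  case False
  with assms(1,2) have "0 < I1" "0 < I2"
    by auto
  have balanced: "s1 * s2 + J = (s2 / s1) / 2 * (s1\<^sup>2 + 2 / (s2 / s1) * J + s2\<^sup>2 / (s2 / s1)\<^sup>2)"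
    if "0 < s1" "0 < s2" for s1 s2 :: real
    using that by (simp add: field_simps power2_eq_square)
  have "lam\<^sup>2 = (I2 / I1) powr (1/2)"
    unfolding lam_def power2_eq_square by (simp flip: powr_add)
  also have "\<dots> = sqrt I2 / sqrt I1"
    using \<open>0 < I1\<close> \<open>0 < I2\<close> by (simp add: powr_half_sqrt real_sqrt_divide)
  finally show ?thesis
    using balanced[of "sqrt I1" "sqrt I2"] \<open>0 < I1\<close> \<open>0 < I2\<close> by simp
qed

theorem proposition1p1:
  fixes \<alpha> :: "real^'n" and u :: "real^'n \<Rightarrow> real" and g :: "real^'n \<Rightarrow> real^'n"
  assumes "\<forall>i. \<alpha>$i \<ge> 0"
    and "(u, g) \<in> SA \<alpha>"
    and "\<not> (AE x in lborel. x \<in> Rstar \<alpha> \<longrightarrow> u x = 0)"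
  defines "D \<equiv> real CARD('n) + (\<Sum>i\<in>UNIV. \<alpha>$i)"
    and "I1 \<equiv> (LINT x:Rstar \<alpha>|lborel. (norm (g x))\<^sup>2 * wA \<alpha> x)"
    and "I2 \<equiv> (LINT x:Rstar \<alpha>|lborel. (u x)\<^sup>2 * (norm x)\<^sup>2 * wA \<alpha> x)"
  defines "lam \<equiv> (I2 / I1) powr (1/4)"
  shows "sqrt I1 * sqrt I2 - D / 2 * (LINT x:Rstar \<alpha>|lborel. (u x)\<^sup>2 * wA \<alpha> x)
    = lam\<^sup>2 / 2 * (LINT x:Rstar \<alpha>|lborel.
        (norm (exp ((norm x)\<^sup>2 / (2 * lam\<^sup>2)) *\<^sub>R g x
               + (u x * exp ((norm x)\<^sup>2 / (2 * lam\<^sup>2)) / lam\<^sup>2) *\<^sub>R x))\<^sup>2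
        * exp (- (norm x)\<^sup>2 / lam\<^sup>2) * wA \<alpha> x)"
proof -
  let ?M = "weighted_lborel \<alpha>"
  define J where "J = (\<integral>x. (u x *\<^sub>R x) \<bullet> g x \<partial>?M)"
  note L2 = SA_dilation_identity(1-3)[OF assms(1,2)]
  have meas [measurable]: "u \<in> borel_measurable borel" "g \<in> borel_measurable borel"
    using assms(2) by (simp_all add: SA_def)
  have I1: "I1 = (\<integral>x. (norm (g x))\<^sup>2 \<partial>?M)" and I2: "I2 = (\<integral>x. (norm (u x *\<^sub>R x))\<^sup>2 \<partial>?M)"
    unfolding I1_def I2_def by (subst set_integral_eq_weighted_lborel; simp add: power_mult_distrib)+
  have "D / 2 * (LINT x:Rstar \<alpha>|lborel. (u x)\<^sup>2 * wA \<alpha> x) = - J"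
    unfolding D_def J_def using SA_dilation_identity(4)[OF assms(1,2)]
    by (simp add: set_integral_eq_weighted_lborel)
  moreover have "0 \<le> I1" "0 \<le> I2"
    unfolding I1 I2 by simp_all
  moreover have "\<bar>J\<bar> \<le> sqrt I1 * sqrt I2"
    unfolding I1 I2 J_def using abs_integral_inner_le[OF _ _ L2(3,2)] by (simp add: mult.commute)
  ultimately show ?thesis
    using sqrt_mult_add_eq_balanced_sum[of I1 I2 J, folded lam_def]
    unfolding set_integral_gaussian_conjugate_norm_sq[OF meas L2(2,3)] I1[symmetric] I2[symmetric]
      J_def[symmetric]
    by linarith
qed

end
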